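(* For every $l\ge0$, $a=1,\dots,p_1$, $b=1,\dots,p_2$: $$zA^{(l)}_a(z)=\sum_{k=-N_2}^{N_1}J_k(l)A^{(l+k)}_a(z),\qquad zC^{(l)}_b(z)-c_b^{(l)}=\sum_{k=-N_2}^{N_1}J_k(l)C^{(l+k)}_b(z),$$ $$z\bar A^{(l)}_b(z)=\sum_{k=-N_2}^{N_1}J_k(l-k)\bar A^{(l-k)}_b(z),\qquad z\bar C^{(l)}_a(z)-\bar c_a^{(l)}=\sum_{k=-N_2}^{N_1}J_k(l-k)\bar C^{(l-k)}_a(z),$$ where terms with a negative superscript or negative argument are zero.
   Context: Setting: $\mu$ finite Borel measure on an interval, weights $w_{1,a}$ ($a\le p_1$), $w_{2,b}$ ($b\le p_2$), compositions $\vec n_\ell=(n_{\ell,1},\dots,n_{\ell,p_\ell})\in\mathbb N^{p_\ell}$; each $i\in\mathbb Z_+$ is uniquely $i=q|\vec n_\ell|+n_{\ell,1}+\dots+n_{\ell,a-1}+r$ ($0\le r<n_{\ell,a}$), $a_\ell(i)=a$, $k_\ell(i)=qn_{\ell,a}+r$; moment matrix $g_{i,j}=\int x^{k_1(i)+k_2(j)}w_{1,a_1(i)}w_{2,a_2(j)}d\mu$, assumed to factor as $g=S^{-1}\bar S$ ($S$ unit lower triangular, $\bar S$ upper triangular invertible). $e_{\ell,a}(k)=e_i$ with $a_\ell(i)=a,k_\ell(i)=k$; $\Lambda_{\ell,a}=\sum_ke_{\ell,a}(k)e_{\ell,a}(k+1)^\top$, $\Upsilon_\ell=\sum_a\Lambda_{\ell,a}$;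 $J=S\Upsilon_1S^{-1}=\bar S\Upsilon_2^\top\bar S^{-1}$ and $J_k(l):=J_{l,l+k}$. $N_1=\max_a(|\vec n_1|-n_{1,a}+1)$, $N_2=\max_b(|\vec n_2|-n_{2,b}+1)$. $\chi_{\ell,a}(z)=\sum_ke_{\ell,a}(k)z^k$, $\chi^*_{\ell,a}(z)=z^{-1}\chi_{\ell,a}(z^{-1})$. $A^{(l)}_a$ is the $l$-th entry of $S\chi_{1,a}$, $\bar A^{(l)}_b$ the $l$-th entry of $(\bar S^{-1})^\top\chi_{2,b}$, $C^{(l)}_b$ the $l$-th entry of the formal series vector $\bar S\chi^*_{2,b}(z)$, $\bar C^{(l)}_a$ the $l$-th entry of $(S^{-1})^\top\chi^*_{1,a}(z)$; $c_b=\bar Se_{2,b}(0)$, $\bar c_a=(S^{-1})^\top e_{1,a}(0)$, with $l$-th entries $c^{(l)}_b$, $\bar c^{(l)}_a$. *)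

theory Defs
  imports "HOL-Analysis.Analysis" "HOL-Computational_Algebra.Formal_Laurent_Series"
begin

text \<open>A composition is a function n :: nat => nat together with its length p;
  only the values n 1, ..., n p matter.  |n| = n 1 + ... + n p.\<close>

definition comp_ok :: "(nat \<Rightarrow> nat) \<Rightarrow> nat \<Rightarrow> bool" where
  "comp_ok n p \<longleftrightarrow> p \<ge> 1 \<and> (\<forall>a\<in>{1..p}. n a > 0)"

definition comp_size :: "(nat \<Rightarrow> nat) \<Rightarrow> nat \<Rightarrow> nat" where
  "comp_size n p = (\<Sum>a=1..p. n a)"

definition decomp :: "(nat \<Rightarrow> nat) \<Rightarrow> nat \<Rightarrow> nat \<Rightarrow> nat \<times> nat \<times> nat" where
  "decomp n p i = (THE (q, a, r). 1 \<le> a \<and> a \<le> p \<and> r < n a \<and>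
       i = q * comp_size n p + (\<Sum>a'\<in>{1..<a}. n a') + r)"

definition aidx :: "(nat \<Rightarrow> nat) \<Rightarrow> nat \<Rightarrow> nat \<Rightarrow> nat" where
  "aidx n p i = (case decomp n p i of (q, a, r) \<Rightarrow> a)"

definition kidx :: "(nat \<Rightarrow> nat) \<Rightarrow> nat \<Rightarrow> nat \<Rightarrow> nat" where
  "kidx n p i = (case decomp n p i of (q, a, r) \<Rightarrow> q * n a + r)"

text \<open>e_{l,a}(k) = e_i with a(i) = a, k(i) = k; we record the index i.\<close>
definition eidx :: "(nat \<Rightarrow> nat) \<Rightarrow> nat \<Rightarrow> nat \<Rightarrow> nat \<Rightarrow> nat" where
  "eidx n p a k = (THE i. aidx n p i = a \<and> kidx n p i = k)"

definition Nbd :: "(nat \<Rightarrow> nat) \<Rightarrow> nat \<Rightarrow> nat" where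
  "Nbd n p = Max ((\<lambda>a. comp_size n p - n a + 1) ` {1..p})"

type_synonym imat = "nat \<Rightarrow> nat \<Rightarrow> real"

text \<open>Product of semi-infinite matrices, (A B)_{ij} = sum_k A_{ik} B_{kj}
  (all products used below involve only finitely many nonzero terms).\<close>
definition mat_mult :: "imat \<Rightarrow> imat \<Rightarrow> imat" where
  "mat_mult A B = (\<lambda>i j. infsum (\<lambda>k. A i k * B k j) UNIV)"

definition mat_id :: imat where
  "mat_id = (\<lambda>i j. if i = j then 1 else 0)"

definition lower_tri :: "imat \<Rightarrow> bool" where
  "lower_tri M \<longleftrightarrow> (\<forall>i j. i < j \<longrightarrow> M i j = 0)"

definition upper_tri :: "imat \<Rightarrow> bool" where
  "upper_tri M \<longleftrightarrow> (\<forall>i j. j < i \<longrightarrow> M i j = 0)"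

definition lt_inv :: "imat \<Rightarrow> imat" where
  "lt_inv M = (THE N. lower_tri N \<and> mat_mult M N = mat_id \<and> mat_mult N M = mat_id)"

definition ut_inv :: "imat \<Rightarrow> imat" where
  "ut_inv M = (THE N. upper_tri N \<and> mat_mult M N = mat_id \<and> mat_mult N M = mat_id)"

definition Lambda :: "(nat \<Rightarrow> nat) \<Rightarrow> nat \<Rightarrow> nat \<Rightarrow> imat" where
  "Lambda n p a = (\<lambda>i j. if \<exists>k. i = eidx n p a k \<and> j = eidx n p a (Suc k) then 1 else 0)"

definition Upsilon :: "(nat \<Rightarrow> nat) \<Rightarrow> nat \<Rightarrow> imat" where
  "Upsilon n p = (\<lambda>i j. \<Sum>a=1..p. Lambda n p a i j)"

definition moment_mat ::
  "real measure \<Rightarrow> (nat \<Rightarrow> real \<Rightarrow> real) \<Rightarrow> (nat \<Rightarrow> real \<Rightarrow> real)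
   \<Rightarrow> (nat \<Rightarrow> nat) \<Rightarrow> nat \<Rightarrow> (nat \<Rightarrow> nat) \<Rightarrow> nat \<Rightarrow> imat" where
  "moment_mat \<mu> w1 w2 n1 p1 n2 p2 = (\<lambda>i j.
     integral\<^sup>L \<mu> (\<lambda>x. x ^ (kidx n1 p1 i + kidx n2 p2 j)
                      * w1 (aidx n1 p1 i) x * w2 (aidx n2 p2 j) x))"

text \<open>Polynomials in z and formal series in z^{-1} are both represented as
  real formal Laurent series in the variable X = z^{-1}; thus z = X^{-1}.\<close>
definition zvar :: "real fls" where "zvar = fls_X_inv"
definition zinv :: "real fls" where "zinv = fls_X"

definition zinv_series :: "(nat \<Rightarrow> real) \<Rightarrow> real fls" where
  "zinv_series f = fps_to_fls (Abs_fps f)"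

definition Jmat :: "imat \<Rightarrow> (nat \<Rightarrow> nat) \<Rightarrow> nat \<Rightarrow> imat" where
  "Jmat S n1 p1 = mat_mult (mat_mult S (Upsilon n1 p1)) (lt_inv S)"

definition Jk :: "imat \<Rightarrow> int \<Rightarrow> int \<Rightarrow> real" where
  "Jk J k l = (if l < 0 \<or> l + k < 0 then 0 else J (nat l) (nat (l + k)))"

text \<open>A^{(l)}_a = l-th entry of S chi_{1,a} (S lower triangular, so only indices <= l occur).\<close>
definition Apol :: "imat \<Rightarrow> (nat \<Rightarrow> nat) \<Rightarrow> nat \<Rightarrow> nat \<Rightarrow> int \<Rightarrow> real fls" where
  "Apol S n1 p1 a l = (if l < 0 then 0 else
     (\<Sum>k\<in>{k. eidx n1 p1 a k \<le> nat l}. fls_const (S (nat l) (eidx n1 p1 a k)) * zvar ^ k))"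

text \<open>Abar^{(l)}_b = l-th entry of (Sbar^{-1})^T chi_{2,b} (Sbar^{-1} upper triangular).\<close>
definition Abarpol :: "imat \<Rightarrow> (nat \<Rightarrow> nat) \<Rightarrow> nat \<Rightarrow> nat \<Rightarrow> int \<Rightarrow> real fls" where
  "Abarpol Sb n2 p2 b l = (if l < 0 then 0 else
     (\<Sum>k\<in>{k. eidx n2 p2 b k \<le> nat l}. fls_const (ut_inv Sb (eidx n2 p2 b k) (nat l)) * zvar ^ k))"

text \<open>C^{(l)}_b = l-th entry of Sbar chi*_{2,b}(z) = sum_k Sbar_{l, e_{2,b}(k)} z^{-k-1}.\<close>
definition Cser :: "imat \<Rightarrow> (nat \<Rightarrow> nat) \<Rightarrow> nat \<Rightarrow> nat \<Rightarrow> int \<Rightarrow> real fls" where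
  "Cser Sb n2 p2 b l = (if l < 0 then 0 else
     zinv * zinv_series (\<lambda>k. Sb (nat l) (eidx n2 p2 b k)))"

text \<open>Cbar^{(l)}_a = l-th entry of (S^{-1})^T chi*_{1,a}(z) = sum_k (S^{-1})_{e_{1,a}(k), l} z^{-k-1}.\<close>
definition Cbarser :: "imat \<Rightarrow> (nat \<Rightarrow> nat) \<Rightarrow> nat \<Rightarrow> nat \<Rightarrow> int \<Rightarrow> real fls" where
  "Cbarser S n1 p1 a l = (if l < 0 then 0 else
     zinv * zinv_series (\<lambda>k. lt_inv S (eidx n1 p1 a k) (nat l)))"

definition cvec :: "imat \<Rightarrow> (nat \<Rightarrow> nat) \<Rightarrow> nat \<Rightarrow> nat \<Rightarrow> nat \<Rightarrow> real" where
  "cvec Sb n2 p2 b l = Sb l (eidx n2 p2 b 0)"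

definition cbarvec :: "imat \<Rightarrow> (nat \<Rightarrow> nat) \<Rightarrow> nat \<Rightarrow> nat \<Rightarrow> nat \<Rightarrow> real" where
  "cbarvec S n1 p1 a l = lt_inv S (eidx n1 p1 a 0) l"

end

theory Submission
  imports Defs
begin

text \<open>The matrix J = S U1 S^-1 (U1, U2 the shift matrices Upsilon) satisfies J S = S U1,
  and, because the moment matrix g obeys the block Hankel symmetry U1 g = g U2^T, also
  J Sb = Sb U2^T; dually S^-1 J = U1 S^-1 and Sb^-1 J = U2^T Sb^-1.  Multiplication by z
  maps e_a(k) to e_a(k+1), so reading these four matrix identities along the columns
  (resp. rows) e_a(k) gives the four recurrences coefficientwise.  Comparing the two
  expressions S U1 S^-1 and Sb U2^T Sb^-1 of J with the triangularity of S and Sb, and using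
  that U1, U2 move an index forward by at most N1, N2, shows that J is banded with N1
  superdiagonals and N2 subdiagonals, so the sums are finite.\<close>

section \<open>The index bijection of a composition\<close>

definition comp_offset :: "(nat \<Rightarrow> nat) \<Rightarrow> nat \<Rightarrow> nat" where
  "comp_offset n a = (\<Sum>a'\<in>{1..<a}. n a')"

lemma comp_offset_Suc: "1 \<le> a \<Longrightarrow> comp_offset n (Suc a) = comp_offset n a + n a"
  unfolding comp_offset_def by (simp add: add.commute)

lemma comp_offset_mono: "a \<le> a' \<Longrightarrow> comp_offset n a \<le> comp_offset n a'"
  unfolding comp_offset_def by (rule sum_mono2) auto

lemma comp_offset_Suc_length: "comp_offset n (Suc p) = comp_size n p"
  unfolding comp_offset_def comp_size_def by (rule sum.cong) auto

context
  fixes n :: "nat \<Rightarrow> nat" and p :: nat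
  assumes comp: "comp_ok n p"
begin

lemma comp_length_pos: "1 \<le> p" and comp_part_pos: "a \<in> {1..p} \<Longrightarrow> 0 < n a"
  using comp unfolding comp_ok_def by auto

lemma comp_offset_add_part_le: "a \<in> {1..p} \<Longrightarrow> comp_offset n a + n a \<le> comp_size n p"
  using comp_offset_mono[of "Suc a" "Suc p" n] comp_offset_Suc[of a n]
  by (simp add: comp_offset_Suc_length)

lemma comp_size_pos: "0 < comp_size n p"
  using comp_offset_add_part_le[of 1] comp_part_pos[of 1] comp_length_pos by auto

lemma decomp_code_inj:
  assumes a: "a \<in> {1..p}" "r < n a" and a': "a' \<in> {1..p}" "r' < n a'"
    and eq: "q * comp_size n p + comp_offset n a + r = q' * comp_size n p + comp_offset n a' + r'"
  shows "q = q' \<and> a = a' \<and> r = r'"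
proof -
  let ?S = "comp_size n p"
  have "comp_offset n a + r < ?S" "comp_offset n a' + r' < ?S"
    using comp_offset_add_part_le[OF a(1)] comp_offset_add_part_le[OF a'(1)] a(2) a'(2) by linarith+
  then have "(q * ?S + (comp_offset n a + r)) div ?S = q"
    "(q' * ?S + (comp_offset n a' + r')) div ?S = q'" by simp_all
  then have q: "q = q'" using eq by (simp add: add.assoc)
  then have offsets: "comp_offset n a + r = comp_offset n a' + r'" using eq by simp
  have "a = a'"
  proof (rule ccontr)
    have "comp_offset n a + r < comp_offset n a'" if "a < a'" "a \<in> {1..p}" "r < n a" for a a' r
      using comp_offset_mono[of "Suc a" a' n] comp_offset_Suc[of a n] that by auto
    moreover assume "a \<noteq> a'"
    ultimately show False using offsets a a' by (metis less_irrefl linorder_neqE_nat trans_less_add1)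
  qed
  then show ?thesis using q offsets by simp
qed

lemma decomp_code_exists:
  "\<exists>q a r. a \<in> {1..p} \<and> r < n a \<and> i = q * comp_size n p + comp_offset n a + r"
proof -
  let ?S = "comp_size n p"
  define s where "s = i mod ?S"
  define A where "A = {a \<in> {1..p}. comp_offset n a \<le> s}"
  define a where "a = Max A"
  have A: "finite A" "1 \<in> A" using comp_length_pos by (auto simp: A_def comp_offset_def)
  then have "a \<in> A" unfolding a_def by (intro Max_in) auto
  then have a: "a \<in> {1..p}" "comp_offset n a \<le> s" unfolding A_def by auto
  have a_max: "a' \<le> a" if "a' \<in> A" for a' unfolding a_def using A(1) that by (rule Max_ge)
  have "s < comp_offset n (Suc a)"
  proof (cases "a < p")
    case True
    then show ?thesis using a_max[of "Suc a"] by (force simp: A_def)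
  next
    case False
    then show ?thesis using a comp_size_pos comp_offset_Suc_length by (simp add: s_def)
  qed
  then have "s - comp_offset n a < n a" using comp_offset_Suc[of a n] a by simp
  moreover have "i = (i div ?S) * ?S + comp_offset n a + (s - comp_offset n a)"
    using a(2) div_mult_mod_eq[of i ?S] unfolding s_def by linarith
  ultimately show ?thesis using a(1) by blast
qed

lemma decomp_eqI:
  assumes "a \<in> {1..p}" "r < n a" "i = q * comp_size n p + comp_offset n a + r"
  shows "decomp n p i = (q, a, r)"
  unfolding decomp_def
proof (rule the_equality)
  fix x assume "case x of (q, a, r) \<Rightarrow> 1 \<le> a \<and> a \<le> p \<and> r < n a \<and>
       i = q * comp_size n p + (\<Sum>a'\<in>{1..<a}. n a') + r"
  then obtain q' a' r' where x: "x = (q', a', r')" "a' \<in> {1..p}" "r' < n a'"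
      "i = q' * comp_size n p + comp_offset n a' + r'"
    by (cases x) (auto simp: comp_offset_def)
  have "q' * comp_size n p + comp_offset n a' + r' = q * comp_size n p + comp_offset n a + r"
    using x(4) assms(3) by (rule trans[OF sym])
  then show "x = (q, a, r)" using decomp_code_inj[OF x(2,3) assms(1,2)] x(1) by simp
next
  show "case (q, a, r) of (q, a, r) \<Rightarrow> 1 \<le> a \<and> a \<le> p \<and> r < n a \<and>
       i = q * comp_size n p + (\<Sum>a'\<in>{1..<a}. n a') + r"
    using assms by (simp add: comp_offset_def)
qed

lemma decompE:
  obtains q a r where "decomp n p i = (q, a, r)" "a \<in> {1..p}" "r < n a"
    "i = q * comp_size n p + comp_offset n a + r"
  using decomp_code_exists[of i] decomp_eqI by blast

lemma aidx_in_range: "aidx n p i \<in> {1..p}"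
  by (rule decompE[of i]) (auto simp: aidx_def)

lemma eidx_eq:
  assumes a: "a \<in> {1..p}"
  shows "eidx n p a k = (k div n a) * comp_size n p + comp_offset n a + k mod n a"
proof -
  define i where "i = (k div n a) * comp_size n p + comp_offset n a + k mod n a"
  have "decomp n p i = (k div n a, a, k mod n a)"
    using a comp_part_pos[OF a] by (intro decomp_eqI) (auto simp: i_def)
  then have idx: "aidx n p i = a" "kidx n p i = k" by (simp_all add: aidx_def kidx_def)
  have "j = i" if "aidx n p j = a" "kidx n p j = k" for j
  proof (rule decompE[of j])
    fix q a' r assume d: "decomp n p j = (q, a', r)" "a' \<in> {1..p}" "r < n a'"
      "j = q * comp_size n p + comp_offset n a' + r"
    then have "a' = a" "k = q * n a + r" using that by (simp_all add: aidx_def kidx_def)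
    then have "k div n a = q" "k mod n a = r" using d(3) by simp_all
    then show "j = i" using d \<open>a' = a\<close> by (simp add: i_def)
  qed
  then show ?thesis unfolding eidx_def i_def[symmetric] using idx by blast
qed

lemma decomp_eidx: "a \<in> {1..p} \<Longrightarrow> decomp n p (eidx n p a k) = (k div n a, a, k mod n a)"
  using comp_part_pos[of a] by (intro decomp_eqI) (auto simp: eidx_eq)

lemma aidx_eidx: "a \<in> {1..p} \<Longrightarrow> aidx n p (eidx n p a k) = a"
  and kidx_eidx: "a \<in> {1..p} \<Longrightarrow> kidx n p (eidx n p a k) = k"
  by (simp_all add: decomp_eidx aidx_def kidx_def)

lemma eidx_aidx_kidx: "eidx n p (aidx n p i) (kidx n p i) = i"
proof (rule decompE[of i])
  fix q a r assume d: "decomp n p i = (q, a, r)" "a \<in> {1..p}" "r < n a"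
    "i = q * comp_size n p + comp_offset n a + r"
  then have "aidx n p i = a" "kidx n p i = q * n a + r" by (simp_all add: aidx_def kidx_def)
  moreover have "(q * n a + r) div n a = q" "(q * n a + r) mod n a = r" using d(3) by simp_all
  ultimately show ?thesis using d(2) by (simp add: eidx_eq d(4))
qed

lemma eidx_inj:
  assumes "a \<in> {1..p}" "a' \<in> {1..p}" "eidx n p a k = eidx n p a' k'"
  shows "a = a' \<and> k = k'"
  using aidx_eidx[OF assms(1), of k] aidx_eidx[OF assms(2), of k']
    kidx_eidx[OF assms(1), of k] kidx_eidx[OF assms(2), of k'] assms(3) by simp

lemma Nbd_ge: "a \<in> {1..p} \<Longrightarrow> comp_size n p - n a + 1 \<le> Nbd n p"
  unfolding Nbd_def by (rule Max_ge) auto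

lemma eidx_Suc_bounds:
  assumes a: "a \<in> {1..p}"
  shows "eidx n p a k < eidx n p a (Suc k) \<and> eidx n p a (Suc k) \<le> eidx n p a k + Nbd n p"
proof -
  let ?m = "n a"
  define q r where "q = k div ?m" and "r = k mod ?m"
  have m: "0 < ?m" using comp_part_pos[OF a] .
  have k: "k = q * ?m + r" and r: "r < ?m" using m by (auto simp: q_def r_def)
  show ?thesis
  proof (cases "Suc r < ?m")
    case True
    have sk: "Suc k = Suc r + q * ?m" using k by simp
    have "Suc k div ?m = q" "Suc k mod ?m = Suc r"
      unfolding sk using True m by (simp_all only: div_mult_self1 mod_mult_self1) simp_all
    then have "eidx n p a (Suc k) = Suc (eidx n p a k)"
      by (simp add: eidx_eq[OF a] q_def[symmetric] r_def[symmetric])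
    then show ?thesis using Nbd_ge[OF a] by simp
  next
    case False
    then have "Suc k = Suc q * ?m" using k r by simp
    then have "Suc k div ?m = Suc q" "Suc k mod ?m = 0" using m by simp_all
    moreover have "Suc r = ?m" using False r by simp
    ultimately have "eidx n p a (Suc k) = eidx n p a k + (comp_size n p - ?m + 1)"
      using comp_offset_add_part_le[OF a]
      by (simp add: eidx_eq[OF a] q_def[symmetric] r_def[symmetric])
    then show ?thesis using Nbd_ge[OF a] comp_offset_add_part_le[OF a] m by arith
  qed
qed

lemma eidx_ge: "a \<in> {1..p} \<Longrightarrow> k \<le> eidx n p a k"
proof (induction k)
  case (Suc k)
  then show ?case using eidx_Suc_bounds[of a k] by simp
qed simp

definition next_idx :: "nat \<Rightarrow> nat" where
  "next_idx i = eidx n p (aidx n p i) (Suc (kidx n p i))"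

lemma next_idx_bounds: "i < next_idx i \<and> next_idx i \<le> i + Nbd n p"
  using eidx_Suc_bounds[OF aidx_in_range, of i "kidx n p i"] eidx_aidx_kidx[of i]
  by (simp add: next_idx_def)

lemma aidx_next_idx: "aidx n p (next_idx i) = aidx n p i"
  and kidx_next_idx: "kidx n p (next_idx i) = Suc (kidx n p i)"
  unfolding next_idx_def using aidx_eidx kidx_eidx aidx_in_range by simp_all

lemma next_idx_eidx: "a \<in> {1..p} \<Longrightarrow> next_idx (eidx n p a k) = eidx n p a (Suc k)"
  by (simp add: next_idx_def aidx_eidx kidx_eidx)

lemma next_idx_eq_eidx_iff:
  assumes a: "a \<in> {1..p}"
  shows "next_idx i = eidx n p a j \<longleftrightarrow> 0 < j \<and> i = eidx n p a (j - 1)"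
proof
  assume "next_idx i = eidx n p a j"
  then have "aidx n p i = a \<and> Suc (kidx n p i) = j"
    using eidx_inj[OF aidx_in_range a] by (simp add: next_idx_def)
  then show "0 < j \<and> i = eidx n p a (j - 1)" using eidx_aidx_kidx[of i] by auto
next
  assume "0 < j \<and> i = eidx n p a (j - 1)"
  then show "next_idx i = eidx n p a j" using next_idx_eidx[OF a, of "j - 1"] by simp
qed

lemma Upsilon_eq: "Upsilon n p i j = (if j = next_idx i then 1 else 0)"
proof -
  have "Lambda n p a i j = (if a = aidx n p i \<and> j = next_idx i then 1 else 0)"
    if a: "a \<in> {1..p}" for a
  proof -
    have "(\<exists>k. i = eidx n p a k \<and> j = eidx n p a (Suc k))
        \<longleftrightarrow> a = aidx n p i \<and> j = next_idx i"
    proof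
      assume "\<exists>k. i = eidx n p a k \<and> j = eidx n p a (Suc k)"
      then show "a = aidx n p i \<and> j = next_idx i" using aidx_eidx[OF a] next_idx_eidx[OF a] by auto
    next
      assume "a = aidx n p i \<and> j = next_idx i"
      then show "\<exists>k. i = eidx n p a k \<and> j = eidx n p a (Suc k)"
        using eidx_aidx_kidx[of i] unfolding next_idx_def by (intro exI[of _ "kidx n p i"]) auto
    qed
    then show ?thesis by (simp add: Lambda_def)
  qed
  then have "Upsilon n p i j = (\<Sum>a\<in>{1..p}. if a = aidx n p i \<and> j = next_idx i then 1 else 0)"
    unfolding Upsilon_def by (intro sum.cong) auto
  also have "\<dots> = (if j = next_idx i then 1 else 0)"
    using aidx_in_range[of i] by (auto simp: sum.delta)
  finally show ?thesis .
qed

end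

lemma moment_mat_next_idx:
  assumes "comp_ok n1 p1" "comp_ok n2 p2"
  shows "moment_mat \<mu> w1 w2 n1 p1 n2 p2 (next_idx n1 p1 i) j
       = moment_mat \<mu> w1 w2 n1 p1 n2 p2 i (next_idx n2 p2 j)"
  unfolding moment_mat_def using assms by (simp add: aidx_next_idx kidx_next_idx)

section \<open>Semi-infinite matrices\<close>

definition mat_tr :: "imat \<Rightarrow> imat" where
  "mat_tr A = (\<lambda>i j. A j i)"

lemma mat_tr_tr [simp]: "mat_tr (mat_tr A) = A"
  by (simp add: mat_tr_def)

lemma mat_tr_id [simp]: "mat_tr mat_id = mat_id"
  unfolding mat_tr_def mat_id_def by (intro ext) simp

lemma lower_tri_mat_tr: "lower_tri (mat_tr A) \<longleftrightarrow> upper_tri A"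
  by (auto simp: mat_tr_def lower_tri_def upper_tri_def)

lemma mat_tr_mat_mult: "mat_tr (mat_mult A B) = mat_mult (mat_tr B) (mat_tr A)"
  unfolding mat_tr_def mat_mult_def by (simp add: mult.commute)

lemma infsum_eq_sum_support:
  fixes f :: "nat \<Rightarrow> real"
  assumes "finite F" "\<And>k. k \<notin> F \<Longrightarrow> f k = 0"
  shows "infsum f UNIV = sum f F"
  using infsum_cong_neutral[of F UNIV f f] assms by simp

lemma mat_mult_eq_sum:
  assumes "finite F" "\<And>k. k \<notin> F \<Longrightarrow> A i k * B k j = 0"
  shows "mat_mult A B i j = (\<Sum>k\<in>F. A i k * B k j)"
  unfolding mat_mult_def using assms by (rule infsum_eq_sum_support)

lemma mat_mult_assoc_entry:
  assumes K: "finite K" and M: "finite M"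
    and A0: "\<And>k. k \<notin> K \<Longrightarrow> A i k = 0"
    and B0: "\<And>k m. k \<in> K \<Longrightarrow> m \<notin> M \<Longrightarrow> B k m = 0"
  shows "mat_mult (mat_mult A B) C i j = mat_mult A (mat_mult B C) i j"
proof -
  have AB: "mat_mult A B i m = (\<Sum>k\<in>K. A i k * B k m)" for m
    by (rule mat_mult_eq_sum) (use K A0 in auto)
  have BC: "mat_mult B C k j = (\<Sum>m\<in>M. B k m * C m j)" if "k \<in> K" for k
    by (rule mat_mult_eq_sum) (use M B0 that in auto)
  have "mat_mult (mat_mult A B) C i j = (\<Sum>m\<in>M. mat_mult A B i m * C m j)"
    by (rule mat_mult_eq_sum) (use M B0 in \<open>auto simp: AB\<close>)
  also have "\<dots> = (\<Sum>k\<in>K. \<Sum>m\<in>M. A i k * B k m * C m j)"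
    unfolding AB by (simp add: sum_distrib_right sum.swap[of _ M])
  also have "\<dots> = (\<Sum>k\<in>K. A i k * mat_mult B C k j)"
    by (rule sum.cong) (simp_all add: BC sum_distrib_left mult.assoc)
  also have "\<dots> = mat_mult A (mat_mult B C) i j"
    by (rule mat_mult_eq_sum[symmetric]) (use K A0 in auto)
  finally show ?thesis .
qed

lemma mat_mult_assoc_entry':
  assumes K: "finite K" and M: "finite M"
    and C0: "\<And>m. m \<notin> M \<Longrightarrow> C m j = 0"
    and B0: "\<And>k m. m \<in> M \<Longrightarrow> k \<notin> K \<Longrightarrow> B k m = 0"
  shows "mat_mult (mat_mult A B) C i j = mat_mult A (mat_mult B C) i j"
proof -
  have "mat_mult (mat_mult (mat_tr C) (mat_tr B)) (mat_tr A) j i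
      = mat_mult (mat_tr C) (mat_mult (mat_tr B) (mat_tr A)) j i"
    by (rule mat_mult_assoc_entry[OF M K]) (use C0 B0 in \<open>auto simp: mat_tr_def\<close>)
  then have "mat_tr (mat_mult A (mat_mult B C)) j i = mat_tr (mat_mult (mat_mult A B) C) j i"
    by (simp only: mat_tr_mat_mult)
  then show ?thesis by (simp add: mat_tr_def)
qed

lemma mat_mult_id_right [simp]: "mat_mult A mat_id = A"
proof (intro ext)
  fix i j
  have "mat_mult A mat_id i j = (\<Sum>k\<in>{j}. A i k * mat_id k j)"
    by (rule mat_mult_eq_sum) (auto simp: mat_id_def)
  then show "mat_mult A mat_id i j = A i j" by (simp add: mat_id_def)
qed

lemma mat_mult_id_left [simp]: "mat_mult mat_id A = A"
  using mat_mult_id_right[of "mat_tr A"] by (metis mat_tr_id mat_tr_mat_mult mat_tr_tr)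

lemma mat_mult_assoc_lower:
  assumes "lower_tri A" "lower_tri B"
  shows "mat_mult (mat_mult A B) C = mat_mult A (mat_mult B C)"
proof (intro ext)
  fix i j
  show "mat_mult (mat_mult A B) C i j = mat_mult A (mat_mult B C) i j"
    by (rule mat_mult_assoc_entry[of "{..i}" "{..i}"]) (use assms in \<open>auto simp: lower_tri_def\<close>)
qed

lemma mat_mult_assoc_upper:
  assumes "upper_tri B" "upper_tri C"
  shows "mat_mult (mat_mult A B) C = mat_mult A (mat_mult B C)"
proof (intro ext)
  fix i j
  show "mat_mult (mat_mult A B) C i j = mat_mult A (mat_mult B C) i j"
    by (rule mat_mult_assoc_entry'[of "{..j}" "{..j}"]) (use assms in \<open>auto simp: upper_tri_def\<close>)
qed

text \<open>Forward substitution: the right inverse of a lower triangular matrix, column by column.\<close>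
function lower_inv_rec :: "imat \<Rightarrow> nat \<Rightarrow> nat \<Rightarrow> real" where
  "lower_inv_rec M i j = (if i < j then 0 else if i = j then 1 / M i i
      else - (\<Sum>k\<in>{j..<i}. M i k * lower_inv_rec M k j) / M i i)"
  by pat_completeness auto
termination by (relation "Wellfounded.measure (\<lambda>(M, i, j). i)") auto

declare lower_inv_rec.simps [simp del]

lemma lower_inv_rec_right_inverse:
  assumes L: "lower_tri M" and D: "\<And>i. M i i \<noteq> 0"
  shows "lower_tri (lower_inv_rec M)" "lower_inv_rec M i i \<noteq> 0"
    "mat_mult M (lower_inv_rec M) = mat_id"
proof -
  let ?N = "lower_inv_rec M"
  show "lower_tri ?N" unfolding lower_tri_def by (subst lower_inv_rec.simps) simp
  show "?N i i \<noteq> 0" using D[of i] by (subst lower_inv_rec.simps) simp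
  have "mat_mult M ?N i j = mat_id i j" for i j
  proof -
    have sum: "mat_mult M ?N i j = (\<Sum>k\<in>{j..i}. M i k * ?N k j)"
      using L by (intro mat_mult_eq_sum) (auto simp: lower_tri_def not_le lower_inv_rec.simps)
    consider "i < j" | "i = j" | "j < i" by linarith
    then show ?thesis
    proof cases
      case 1
      then show ?thesis by (simp add: sum mat_id_def)
    next
      case 2
      have "M i i * ?N i i = 1" using D[of i] by (subst lower_inv_rec.simps) simp
      then show ?thesis unfolding sum using 2 by (simp add: mat_id_def)
    next
      case 3
      then have "{j..i} = insert i {j..<i}" by auto
      moreover have "M i i * ?N i j = - (\<Sum>k\<in>{j..<i}. M i k * ?N k j)"
        using 3 D[of i] by (subst lower_inv_rec.simps) simp
      ultimately show ?thesis using 3 by (simp add: sum mat_id_def)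
    qed
  qed
  then show "mat_mult M ?N = mat_id" by blast
qed

lemma lt_inv_correct:
  assumes L: "lower_tri M" and D: "\<And>i. M i i \<noteq> 0"
  shows "lower_tri (lt_inv M)" "mat_mult M (lt_inv M) = mat_id" "mat_mult (lt_inv M) M = mat_id"
proof -
  define N where "N = lower_inv_rec M"
  note N = lower_inv_rec_right_inverse[OF L D, folded N_def]
  note N' = lower_inv_rec_right_inverse[OF N(1,2)]
  have "M = mat_mult (mat_mult M N) (lower_inv_rec N)"
    by (simp add: mat_mult_assoc_lower[OF L N(1)] N'(3))
  then have NM: "mat_mult N M = mat_id" using N(3) N'(3) by simp
  have "lt_inv M = N" unfolding lt_inv_def
  proof (rule the_equality)
    fix X assume X: "lower_tri X \<and> mat_mult M X = mat_id \<and> mat_mult X M = mat_id"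
    then have "X = mat_mult X (mat_mult M N)" by (simp add: N(3))
    also have "\<dots> = mat_mult (mat_mult X M) N" by (rule mat_mult_assoc_lower[symmetric]) (use X L in auto)
    finally show "X = N" using X by simp
  qed (use N NM in simp)
  then show "lower_tri (lt_inv M)" "mat_mult M (lt_inv M) = mat_id" "mat_mult (lt_inv M) M = mat_id"
    using N NM by simp_all
qed

lemma ut_inv_correct:
  assumes U: "upper_tri M" and D: "\<And>i. M i i \<noteq> 0"
  shows "upper_tri (ut_inv M)" "mat_mult M (ut_inv M) = mat_id" "mat_mult (ut_inv M) M = mat_id"
proof -
  define N where "N = mat_tr (lt_inv (mat_tr M))"
  have "lower_tri (mat_tr M)" "\<And>i. mat_tr M i i \<noteq> 0"
    using U D by (simp_all only: lower_tri_mat_tr) (simp add: mat_tr_def)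
  note inv = lt_inv_correct[OF this]
  have "mat_mult M N = mat_tr (mat_mult (lt_inv (mat_tr M)) (mat_tr M))"
    "mat_mult N M = mat_tr (mat_mult (mat_tr M) (lt_inv (mat_tr M)))"
    unfolding N_def mat_tr_mat_mult by simp_all
  then have N: "upper_tri N" "mat_mult M N = mat_id" "mat_mult N M = mat_id"
    using inv unfolding N_def by (simp_all flip: lower_tri_mat_tr)
  have "ut_inv M = N" unfolding ut_inv_def
  proof (rule the_equality)
    fix X assume X: "upper_tri X \<and> mat_mult M X = mat_id \<and> mat_mult X M = mat_id"
    then have "X = mat_mult (mat_mult N M) X" by (simp add: N(3))
    also have "\<dots> = mat_mult N (mat_mult M X)" by (rule mat_mult_assoc_upper) (use X U in auto)
    finally show "X = N" using X by simp
  qed (use N in simp)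
  then show "upper_tri (ut_inv M)" "mat_mult M (ut_inv M) = mat_id" "mat_mult (ut_inv M) M = mat_id"
    using N by simp_all
qed

lemma sum_band_shift_eq_infsum:
  fixes h :: "nat \<Rightarrow> real" and l A B :: nat
  assumes band: "\<And>m. h m \<noteq> 0 \<Longrightarrow> int m - int l \<in> {- int B..int A}"
  shows "(\<Sum>k\<in>{- int B..int A}. if 0 \<le> int l + k then h (nat (int l + k)) else 0) = infsum h UNIV"
proof -
  let ?I = "{k \<in> {- int B..int A}. 0 \<le> int l + k}"
  let ?f = "\<lambda>k. nat (int l + k)"
  have inj: "inj_on ?f ?I" by (rule inj_onI) (simp add: eq_nat_nat_iff)
  have "(\<Sum>k\<in>{- int B..int A}. if 0 \<le> int l + k then h (nat (int l + k)) else 0)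
      = (\<Sum>k\<in>?I. h (?f k))"
    by (rule sum.inter_filter[symmetric]) simp
  also have "\<dots> = (\<Sum>m\<in>?f ` ?I. h m)" by (simp only: sum.reindex[OF inj] comp_def)
  also have "\<dots> = infsum h UNIV"
  proof (rule infsum_eq_sum_support[symmetric])
    fix m assume m: "m \<notin> ?f ` ?I"
    show "h m = 0"
    proof (rule ccontr)
      assume "h m \<noteq> 0"
      then have "int m - int l \<in> ?I" using band by auto
      moreover have "m = ?f (int m - int l)" by simp
      ultimately show False using m by blast
    qed
  qed (rule finite_imageI, rule finite_subset[of _ "{- int B..int A}"], auto)
  finally show ?thesis .
qed

lemma sum_band_reflect_eq_infsum:
  fixes h :: "nat \<Rightarrow> real" and l A B :: nat
  assumes band: "\<And>m. h m \<noteq> 0 \<Longrightarrow> int l - int m \<in> {- int B..int A}"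
  shows "(\<Sum>k\<in>{- int B..int A}. if 0 \<le> int l - k then h (nat (int l - k)) else 0) = infsum h UNIV"
proof -
  have "(\<Sum>k\<in>{- int B..int A}. if 0 \<le> int l - k then h (nat (int l - k)) else 0)
      = (\<Sum>k\<in>{- int A..int B}. if 0 \<le> int l + k then h (nat (int l + k)) else 0)"
    by (rule sum.reindex_bij_witness[of _ uminus uminus]) auto
  also have "\<dots> = infsum h UNIV"
  proof (rule sum_band_shift_eq_infsum)
    fix m assume "h m \<noteq> 0"
    then show "int m - int l \<in> {- int A..int B}" using band[of m] by simp
  qed
  finally show ?thesis .
qed

lemma fls_nth_sum_monomials:
  assumes "finite K"
  shows "fls_nth (\<Sum>k\<in>K. fls_const (c k) * zvar ^ k) t
       = (if t \<le> 0 \<and> nat (-t) \<in> K then c (nat (-t)) else 0)"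
proof -
  have "fls_nth (\<Sum>k\<in>K. fls_const (c k) * zvar ^ k) t
      = (\<Sum>k\<in>K. if k = nat (-t) then (if t \<le> 0 then c k else 0) else 0)"
    unfolding zvar_def fls_nth_sum by (rule sum.cong) auto
  then show ?thesis using assms by (simp add: sum.delta)
qed

lemma fls_nth_zvar_times: "fls_nth (zvar * f) t = fls_nth f (t + 1)"
  unfolding zvar_def fls_X_inv_times_conv_shift(1) by simp

lemma fls_nth_zinv_times_zinv_series:
  "fls_nth (zinv * zinv_series f) t = (if 1 \<le> t then f (nat (t - 1)) else 0)"
  unfolding zinv_def zinv_series_def fls_X_times_conv_shift(1) by simp

lemma fls_nth_eidx_poly:
  assumes comp: "comp_ok n p" and a: "a \<in> {1..p}"
    and c0: "\<And>k. l < eidx n p a k \<Longrightarrow> c k = 0"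
  shows "fls_nth (\<Sum>k\<in>{k. eidx n p a k \<le> l}. fls_const (c k) * zvar ^ k) t
       = (if t \<le> 0 then c (nat (-t)) else 0)"
proof -
  have "finite {k. eidx n p a k \<le> l}"
    by (rule finite_subset[of _ "{..l}"]) (use eidx_ge[OF comp a] order_trans in auto)
  moreover have "c (nat (- t)) = 0" if "l < eidx n p a (nat (- t))" using c0 that .
  ultimately show ?thesis by (auto simp: fls_nth_sum_monomials not_le)
qed

context
  fixes n :: "nat \<Rightarrow> nat" and p :: nat
  assumes comp: "comp_ok n p"
begin

lemma mat_mult_Upsilon_left: "mat_mult (Upsilon n p) B i j = B (next_idx n p i) j"
proof -
  have "mat_mult (Upsilon n p) B i j = (\<Sum>k\<in>{next_idx n p i}. Upsilon n p i k * B k j)"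
    by (rule mat_mult_eq_sum) (auto simp: Upsilon_eq[OF comp])
  then show ?thesis by (simp add: Upsilon_eq[OF comp])
qed

lemma mat_mult_mat_tr_Upsilon_right: "mat_mult A (mat_tr (Upsilon n p)) i j = A i (next_idx n p j)"
  using mat_mult_Upsilon_left[of "mat_tr A" j i]
  by (simp add: mat_tr_def mat_mult_def mult.commute)

lemma mat_mult_Upsilon_right_eidx:
  assumes a: "a \<in> {1..p}"
  shows "mat_mult A (Upsilon n p) i (eidx n p a k) = (if 0 < k then A i (eidx n p a (k - 1)) else 0)"
proof -
  have U: "Upsilon n p m (eidx n p a k) = (if 0 < k \<and> m = eidx n p a (k - 1) then 1 else 0)" for m
    by (simp add: Upsilon_eq[OF comp] next_idx_eq_eidx_iff[OF comp a] eq_commute[of "eidx n p a k"])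
  have "mat_mult A (Upsilon n p) i (eidx n p a k)
      = (\<Sum>m\<in>{eidx n p a (k - 1)}. A i m * Upsilon n p m (eidx n p a k))"
    by (rule mat_mult_eq_sum) (auto simp: U)
  then show ?thesis by (simp add: U)
qed

end

section \<open>LU factorizations of shift-symmetric matrices\<close>

text \<open>g abstracts the moment matrix: g (next i) j = g i (next j) is the block Hankel symmetry
  U1 g = g U2^T, which holds because both sides are moments of the same power of x.\<close>
locale shift_symmetric_LU =
  fixes n1 :: "nat \<Rightarrow> nat" and p1 :: nat and n2 :: "nat \<Rightarrow> nat" and p2 :: nat
    and g S Sb :: imat
  assumes comp1: "comp_ok n1 p1" and comp2: "comp_ok n2 p2"
    and g_shift: "\<And>i j. g (next_idx n1 p1 i) j = g i (next_idx n2 p2 j)"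
    and S_lower: "lower_tri S" and S_diag: "\<And>i. S i i \<noteq> 0"
    and Sb_upper: "upper_tri Sb" and Sb_diag: "\<And>i. Sb i i \<noteq> 0"
    and factor: "g = mat_mult (lt_inv S) Sb"
begin

abbreviation Si where "Si \<equiv> lt_inv S"
abbreviation Sbi where "Sbi \<equiv> ut_inv Sb"
abbreviation U1 where "U1 \<equiv> Upsilon n1 p1"
abbreviation U2 where "U2 \<equiv> Upsilon n2 p2"
abbreviation J where "J \<equiv> Jmat S n1 p1"
abbreviation N1 where "N1 \<equiv> Nbd n1 p1"
abbreviation N2 where "N2 \<equiv> Nbd n2 p2"

lemmas Si = lt_inv_correct[OF S_lower S_diag]
lemmas Sbi = ut_inv_correct[OF Sb_upper Sb_diag]

lemma S_eq_0: "l < m \<Longrightarrow> S l m = 0" using S_lower by (simp add: lower_tri_def)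
lemma Si_eq_0: "l < m \<Longrightarrow> Si l m = 0" using Si(1) by (simp add: lower_tri_def)
lemma Sb_eq_0: "m < l \<Longrightarrow> Sb l m = 0" using Sb_upper by (simp add: upper_tri_def)
lemma Sbi_eq_0: "m < l \<Longrightarrow> Sbi l m = 0" using Sbi(1) by (simp add: upper_tri_def)

lemma U1_eq_0: "k \<le> l \<Longrightarrow> l + N1 < m \<Longrightarrow> U1 k m = 0"
  using next_idx_bounds[OF comp1, of k] by (auto simp: Upsilon_eq[OF comp1])

lemma S_U1_eq_0:
  assumes "l + N1 < m" shows "mat_mult S U1 l m = 0"
  unfolding mat_mult_def
proof (rule infsum_0)
  fix k
  show "S l k * U1 k m = 0"
    using S_eq_0[of l k] U1_eq_0[of k l m] assms by (cases "k \<le> l") simp_all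
qed

lemma J_eq_0_above:
  assumes "l + N1 < m" shows "J l m = 0"
  unfolding Jmat_def mat_mult_def[of _ Si]
proof (rule infsum_0)
  fix k
  show "mat_mult S U1 l k * Si k m = 0"
    using S_U1_eq_0[of l k] Si_eq_0[of k m] assms by (cases "l + N1 < k") simp_all
qed

lemma J_S: "mat_mult J S = mat_mult S U1"
proof (intro ext)
  fix l j
  have "mat_mult J S l j = mat_mult (mat_mult S U1) (mat_mult Si S) l j"
    unfolding Jmat_def
    by (rule mat_mult_assoc_entry[of "{..l + N1}" "{..l + N1}"]) (auto simp: S_U1_eq_0 Si_eq_0)
  then show "mat_mult J S l j = mat_mult S U1 l j" by (simp add: Si(3))
qed

lemma S_g: "mat_mult S g = Sb"
proof -
  have "mat_mult S g = mat_mult (mat_mult S Si) Sb"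
    unfolding factor by (rule mat_mult_assoc_lower[OF S_lower Si(1), symmetric])
  then show ?thesis by (simp add: Si(2))
qed

lemma J_Sb: "mat_mult J Sb = mat_mult Sb (mat_tr U2)"
proof (intro ext)
  fix l j
  have U1_g: "mat_mult U1 g = (\<lambda>k j. g k (next_idx n2 p2 j))"
    by (intro ext) (simp add: mat_mult_Upsilon_left[OF comp1] g_shift)
  have "mat_mult J Sb l j = mat_mult (mat_mult S U1) g l j"
    unfolding Jmat_def factor
    by (rule mat_mult_assoc_entry[of "{..l + N1}" "{..l + N1}"]) (auto simp: S_U1_eq_0 Si_eq_0)
  also have "\<dots> = mat_mult S (mat_mult U1 g) l j"
    by (rule mat_mult_assoc_entry[of "{..l}" "{..l + N1}"]) (auto simp: S_eq_0 U1_eq_0)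
  also have "\<dots> = mat_mult S g l (next_idx n2 p2 j)"
    unfolding U1_g by (simp add: mat_mult_def)
  also have "\<dots> = Sb l (next_idx n2 p2 j)" by (simp add: S_g)
  also have "\<dots> = mat_mult Sb (mat_tr U2) l j" by (simp add: mat_mult_mat_tr_Upsilon_right[OF comp2])
  finally show "mat_mult J Sb l j = mat_mult Sb (mat_tr U2) l j" .
qed

lemma J_eq_Sb_conj: "J = mat_mult (mat_mult Sb (mat_tr U2)) Sbi"
proof -
  have "J = mat_mult J (mat_mult Sb Sbi)" by (simp only: Sbi(2) mat_mult_id_right)
  also have "\<dots> = mat_mult (mat_mult J Sb) Sbi"
    by (rule mat_mult_assoc_upper[OF Sb_upper Sbi(1), symmetric])
  finally show ?thesis by (simp only: J_Sb)
qed

lemma J_eq_0_below: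
  assumes "m + N2 < l" shows "J l m = 0"
proof -
  have "mat_mult Sb (mat_tr U2) l k * Sbi k m = 0" for k
  proof (cases "k \<le> m")
    case True
    then have "next_idx n2 p2 k < l" using next_idx_bounds[OF comp2, of k] assms by simp
    then show ?thesis by (simp add: mat_mult_mat_tr_Upsilon_right[OF comp2] Sb_eq_0)
  qed (simp add: Sbi_eq_0)
  then have "mat_mult (mat_mult Sb (mat_tr U2)) Sbi l m = 0"
    unfolding mat_mult_def[of "mat_mult Sb (mat_tr U2)" Sbi] by (rule infsum_0)
  then show ?thesis by (simp only: J_eq_Sb_conj)
qed

lemma J_band: "J l m \<noteq> 0 \<Longrightarrow> l \<le> m + N2 \<and> m \<le> l + N1"
  using J_eq_0_above[of l m] J_eq_0_below[of m l] by fastforce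

lemma Si_J: "mat_mult Si J = mat_mult U1 Si"
proof (intro ext)
  fix i j
  have "mat_mult Si (mat_mult S U1) = mat_mult (mat_mult Si S) U1"
    by (rule mat_mult_assoc_lower[OF Si(1) S_lower, symmetric])
  then have "mat_mult Si (mat_mult S U1) = U1" by (simp add: Si(3))
  moreover have "mat_mult (mat_mult Si (mat_mult S U1)) Si i j = mat_mult Si J i j"
    unfolding Jmat_def
    by (rule mat_mult_assoc_entry[of "{..i}" "{..i + N1}"]) (auto simp: S_U1_eq_0 Si_eq_0)
  ultimately show "mat_mult Si J i j = mat_mult U1 Si i j" by simp
qed

lemma Sbi_J: "mat_mult Sbi J = mat_mult (mat_tr U2) Sbi"
proof (intro ext)
  fix i j
  have Sb_U2_eq_0: "Sb k (next_idx n2 p2 m) = 0" if "m \<le> j" "j + N2 < k" for k m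
    using next_idx_bounds[OF comp2, of m] that by (auto simp: Sb_eq_0)
  have "mat_mult Sbi J i j = mat_mult (mat_mult Sbi (mat_mult Sb (mat_tr U2))) Sbi i j"
    unfolding J_eq_Sb_conj
    by (rule mat_mult_assoc_entry'[of "{..j + N2}" "{..j}", symmetric])
       (auto simp: Sbi_eq_0 mat_mult_mat_tr_Upsilon_right[OF comp2] Sb_U2_eq_0)
  also have "mat_mult Sbi (mat_mult Sb (mat_tr U2)) = mat_tr U2"
  proof (intro ext)
    fix k m
    have "mat_mult Sbi (mat_mult Sb (mat_tr U2)) k m = mat_mult (mat_mult Sbi Sb) (mat_tr U2) k m"
      by (rule mat_mult_assoc_entry'[of "{..next_idx n2 p2 m}" "{next_idx n2 p2 m}", symmetric])
         (auto simp: Sb_eq_0 mat_tr_def Upsilon_eq[OF comp2])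
    then show "mat_mult Sbi (mat_mult Sb (mat_tr U2)) k m = mat_tr U2 k m" by (simp add: Sbi)
  qed
  finally show "mat_mult Sbi J i j = mat_mult (mat_tr U2) Sbi i j" .
qed

lemma J_S_eidx:
  "a \<in> {1..p1} \<Longrightarrow>
    mat_mult J S l (eidx n1 p1 a k) = (if 0 < k then S l (eidx n1 p1 a (k - 1)) else 0)"
  by (simp add: J_S mat_mult_Upsilon_right_eidx[OF comp1])

lemma J_Sb_eidx:
  "b \<in> {1..p2} \<Longrightarrow> mat_mult J Sb l (eidx n2 p2 b k) = Sb l (eidx n2 p2 b (Suc k))"
  by (simp add: J_Sb mat_mult_mat_tr_Upsilon_right[OF comp2] next_idx_eidx[OF comp2])

lemma Sbi_J_eidx:
  assumes "b \<in> {1..p2}"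
  shows "mat_mult Sbi J (eidx n2 p2 b k) l = (if 0 < k then Sbi (eidx n2 p2 b (k - 1)) l else 0)"
proof -
  have "mat_mult (mat_tr U2) Sbi = mat_tr (mat_mult (mat_tr Sbi) U2)"
    by (simp add: mat_tr_mat_mult)
  then have "mat_mult Sbi J (eidx n2 p2 b k) l = mat_mult (mat_tr Sbi) U2 l (eidx n2 p2 b k)"
    unfolding Sbi_J by (simp add: mat_tr_def)
  then show ?thesis by (simp add: mat_mult_Upsilon_right_eidx[OF comp2 assms] mat_tr_def)
qed

lemma Si_J_eidx:
  "a \<in> {1..p1} \<Longrightarrow> mat_mult Si J (eidx n1 p1 a k) l = Si (eidx n1 p1 a (Suc k)) l"
  by (simp add: Si_J mat_mult_Upsilon_left[OF comp1] next_idx_eidx[OF comp1])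

lemma fls_nth_Apol:
  "a \<in> {1..p1} \<Longrightarrow>
    fls_nth (Apol S n1 p1 a (int l)) t = (if t \<le> 0 then S l (eidx n1 p1 a (nat (-t))) else 0)"
  unfolding Apol_def by (simp add: fls_nth_eidx_poly[OF comp1] S_eq_0)

lemma fls_nth_Abarpol:
  "b \<in> {1..p2} \<Longrightarrow>
    fls_nth (Abarpol Sb n2 p2 b (int l)) t = (if t \<le> 0 then Sbi (eidx n2 p2 b (nat (-t))) l else 0)"
  unfolding Abarpol_def by (simp add: fls_nth_eidx_poly[OF comp2] Sbi_eq_0)

lemma fls_nth_Cser:
  "fls_nth (Cser Sb n2 p2 b (int l)) t = (if 1 \<le> t then Sb l (eidx n2 p2 b (nat (t - 1))) else 0)"
  unfolding Cser_def by (simp add: fls_nth_zinv_times_zinv_series)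

lemma fls_nth_Cbarser:
  "fls_nth (Cbarser S n1 p1 a (int l)) t = (if 1 \<le> t then Si (eidx n1 p1 a (nat (t - 1))) l else 0)"
  unfolding Cbarser_def by (simp add: fls_nth_zinv_times_zinv_series)

lemma fls_nth_sum_J_row:
  fixes F :: "int \<Rightarrow> real fls"
  assumes F0: "\<And>i. i < 0 \<Longrightarrow> F i = 0"
  shows "fls_nth (\<Sum>k\<in>{- int N2..int N1}. fls_const (Jk J k (int l)) * F (int l + k)) t
       = infsum (\<lambda>m. J l m * fls_nth (F (int m)) t) UNIV"
proof -
  have "fls_nth (\<Sum>k\<in>{- int N2..int N1}. fls_const (Jk J k (int l)) * F (int l + k)) t
      = (\<Sum>k\<in>{- int N2..int N1}. if 0 \<le> int l + k then
           (\<lambda>m. J l m * fls_nth (F (int m)) t) (nat (int l + k)) else 0)"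
    unfolding fls_nth_sum by (rule sum.cong) (auto simp: Jk_def F0)
  also have "\<dots> = infsum (\<lambda>m. J l m * fls_nth (F (int m)) t) UNIV"
    by (rule sum_band_shift_eq_infsum) (use J_band in \<open>fastforce simp del: of_nat_add\<close>)
  finally show ?thesis .
qed

lemma fls_nth_sum_J_column:
  fixes F :: "int \<Rightarrow> real fls"
  assumes F0: "\<And>i. i < 0 \<Longrightarrow> F i = 0"
  shows "fls_nth (\<Sum>k\<in>{- int N2..int N1}. fls_const (Jk J k (int l - k)) * F (int l - k)) t
       = infsum (\<lambda>m. J m l * fls_nth (F (int m)) t) UNIV"
proof -
  have "fls_nth (\<Sum>k\<in>{- int N2..int N1}. fls_const (Jk J k (int l - k)) * F (int l - k)) t
      = (\<Sum>k\<in>{- int N2..int N1}. if 0 \<le> int l - k then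
           (\<lambda>m. J m l * fls_nth (F (int m)) t) (nat (int l - k)) else 0)"
    unfolding fls_nth_sum by (rule sum.cong) (auto simp: Jk_def F0)
  also have "\<dots> = infsum (\<lambda>m. J m l * fls_nth (F (int m)) t) UNIV"
    by (rule sum_band_reflect_eq_infsum) (use J_band in \<open>fastforce simp del: of_nat_add\<close>)
  finally show ?thesis .
qed

lemma A_recurrence:
  assumes a: "a \<in> {1..p1}"
  shows "zvar * Apol S n1 p1 a (int l)
       = (\<Sum>k\<in>{- int N2..int N1}. fls_const (Jk J k (int l)) * Apol S n1 p1 a (int l + k))"
proof (rule fls_eqI)
  fix t
  have "fls_nth (\<Sum>k\<in>{- int N2..int N1}. fls_const (Jk J k (int l)) * Apol S n1 p1 a (int l + k)) t
      = infsum (\<lambda>m. J l m * fls_nth (Apol S n1 p1 a (int m)) t) UNIV"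
    by (rule fls_nth_sum_J_row) (simp add: Apol_def)
  also have "\<dots> = (if t \<le> 0 then mat_mult J S l (eidx n1 p1 a (nat (-t))) else 0)"
    by (cases "t \<le> 0") (simp_all add: fls_nth_Apol[OF a] mat_mult_def)
  also have "\<dots> = fls_nth (zvar * Apol S n1 p1 a (int l)) t"
    unfolding fls_nth_zvar_times fls_nth_Apol[OF a] J_S_eidx[OF a] by (auto simp: nat_diff_distrib)
  finally show "fls_nth (zvar * Apol S n1 p1 a (int l)) t = fls_nth (\<Sum>k\<in>{- int N2..int N1}.
      fls_const (Jk J k (int l)) * Apol S n1 p1 a (int l + k)) t" ..
qed

lemma C_recurrence:
  assumes b: "b \<in> {1..p2}"
  shows "zvar * Cser Sb n2 p2 b (int l) - fls_const (cvec Sb n2 p2 b l)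
       = (\<Sum>k\<in>{- int N2..int N1}. fls_const (Jk J k (int l)) * Cser Sb n2 p2 b (int l + k))"
proof (rule fls_eqI)
  fix t
  have "fls_nth (\<Sum>k\<in>{- int N2..int N1}. fls_const (Jk J k (int l)) * Cser Sb n2 p2 b (int l + k)) t
      = infsum (\<lambda>m. J l m * fls_nth (Cser Sb n2 p2 b (int m)) t) UNIV"
    by (rule fls_nth_sum_J_row) (simp add: Cser_def)
  also have "\<dots> = (if 1 \<le> t then mat_mult J Sb l (eidx n2 p2 b (nat (t - 1))) else 0)"
    by (cases "1 \<le> t") (simp_all add: fls_nth_Cser mat_mult_def)
  also have "\<dots> = fls_nth (zvar * Cser Sb n2 p2 b (int l) - fls_const (cvec Sb n2 p2 b l)) t"
    unfolding fls_minus_nth fls_nth_zvar_times fls_nth_Cser J_Sb_eidx[OF b] fls_const_nth cvec_def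
    by (auto simp: Suc_nat_eq_nat_zadd1)
  finally show "fls_nth (zvar * Cser Sb n2 p2 b (int l) - fls_const (cvec Sb n2 p2 b l)) t
      = fls_nth (\<Sum>k\<in>{- int N2..int N1}. fls_const (Jk J k (int l)) * Cser Sb n2 p2 b (int l + k)) t" ..
qed

lemma Abar_recurrence:
  assumes b: "b \<in> {1..p2}"
  shows "zvar * Abarpol Sb n2 p2 b (int l)
       = (\<Sum>k\<in>{- int N2..int N1}. fls_const (Jk J k (int l - k)) * Abarpol Sb n2 p2 b (int l - k))"
proof (rule fls_eqI)
  fix t
  have "fls_nth (\<Sum>k\<in>{- int N2..int N1}.
        fls_const (Jk J k (int l - k)) * Abarpol Sb n2 p2 b (int l - k)) t
      = infsum (\<lambda>m. J m l * fls_nth (Abarpol Sb n2 p2 b (int m)) t) UNIV"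
    by (rule fls_nth_sum_J_column) (simp add: Abarpol_def)
  also have "\<dots> = (if t \<le> 0 then mat_mult Sbi J (eidx n2 p2 b (nat (-t))) l else 0)"
    by (cases "t \<le> 0") (simp_all add: fls_nth_Abarpol[OF b] mat_mult_def mult.commute)
  also have "\<dots> = fls_nth (zvar * Abarpol Sb n2 p2 b (int l)) t"
    unfolding fls_nth_zvar_times fls_nth_Abarpol[OF b] Sbi_J_eidx[OF b] by (auto simp: nat_diff_distrib)
  finally show "fls_nth (zvar * Abarpol Sb n2 p2 b (int l)) t = fls_nth (\<Sum>k\<in>{- int N2..int N1}.
      fls_const (Jk J k (int l - k)) * Abarpol Sb n2 p2 b (int l - k)) t" ..
qed

lemma Cbar_recurrence:
  assumes a: "a \<in> {1..p1}"
  shows "zvar * Cbarser S n1 p1 a (int l) - fls_const (cbarvec S n1 p1 a l)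
       = (\<Sum>k\<in>{- int N2..int N1}. fls_const (Jk J k (int l - k)) * Cbarser S n1 p1 a (int l - k))"
proof (rule fls_eqI)
  fix t
  have "fls_nth (\<Sum>k\<in>{- int N2..int N1}.
        fls_const (Jk J k (int l - k)) * Cbarser S n1 p1 a (int l - k)) t
      = infsum (\<lambda>m. J m l * fls_nth (Cbarser S n1 p1 a (int m)) t) UNIV"
    by (rule fls_nth_sum_J_column) (simp add: Cbarser_def)
  also have "\<dots> = (if 1 \<le> t then mat_mult Si J (eidx n1 p1 a (nat (t - 1))) l else 0)"
    by (cases "1 \<le> t") (simp_all add: fls_nth_Cbarser mat_mult_def mult.commute)
  also have "\<dots> = fls_nth (zvar * Cbarser S n1 p1 a (int l) - fls_const (cbarvec S n1 p1 a l)) t"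
    unfolding fls_minus_nth fls_nth_zvar_times fls_nth_Cbarser Si_J_eidx[OF a] fls_const_nth cbarvec_def
    by (auto simp: Suc_nat_eq_nat_zadd1)
  finally show "fls_nth (zvar * Cbarser S n1 p1 a (int l) - fls_const (cbarvec S n1 p1 a l)) t
      = fls_nth (\<Sum>k\<in>{- int N2..int N1}.
          fls_const (Jk J k (int l - k)) * Cbarser S n1 p1 a (int l - k)) t" ..
qed

end

theorem theorem2p2:
  fixes \<mu> :: "real measure" and \<Delta> :: "real set"
    and w1 w2 :: "nat \<Rightarrow> real \<Rightarrow> real"
    and n1 n2 :: "nat \<Rightarrow> nat" and p1 p2 :: nat
    and S Sb :: imat
  assumes interval: "is_interval \<Delta>"
    and borel: "sets \<mu> = sets borel"
    and finite: "finite_measure \<mu>"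
    and supp: "emeasure \<mu> (UNIV - \<Delta>) = 0"
    and comp1: "comp_ok n1 p1" and comp2: "comp_ok n2 p2"
    and moments: "\<And>i j. integrable \<mu> (\<lambda>x. x ^ (kidx n1 p1 i + kidx n2 p2 j)
                      * w1 (aidx n1 p1 i) x * w2 (aidx n2 p2 j) x)"
    and S_lower: "lower_tri S" and S_unit: "\<And>i. S i i = 1"
    and Sb_upper: "upper_tri Sb" and Sb_diag: "\<And>i. Sb i i \<noteq> 0"
    and factor: "moment_mat \<mu> w1 w2 n1 p1 n2 p2 = mat_mult (lt_inv S) Sb"
    and a_rng: "a \<in> {1..p1}" and b_rng: "b \<in> {1..p2}"
  defines "J \<equiv> Jmat S n1 p1"
    and "N1 \<equiv> int (Nbd n1 p1)" and "N2 \<equiv> int (Nbd n2 p2)"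
  shows
    "(zvar * Apol S n1 p1 a (int l)
       = (\<Sum>k\<in>{-N2..N1}. fls_const (Jk J k (int l)) * Apol S n1 p1 a (int l + k))) \<and>
    (zvar * Cser Sb n2 p2 b (int l) - fls_const (cvec Sb n2 p2 b l)
       = (\<Sum>k\<in>{-N2..N1}. fls_const (Jk J k (int l)) * Cser Sb n2 p2 b (int l + k))) \<and>
    (zvar * Abarpol Sb n2 p2 b (int l)
       = (\<Sum>k\<in>{-N2..N1}. fls_const (Jk J k (int l - k)) * Abarpol Sb n2 p2 b (int l - k))) \<and>
    (zvar * Cbarser S n1 p1 a (int l) - fls_const (cbarvec S n1 p1 a l)
       = (\<Sum>k\<in>{-N2..N1}. fls_const (Jk J k (int l - k)) * Cbarser S n1 p1 a (int l - k)))"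
proof -
  interpret L: shift_symmetric_LU n1 p1 n2 p2 "moment_mat \<mu> w1 w2 n1 p1 n2 p2" S Sb
    by unfold_locales
      (simp_all add: comp1 comp2 S_lower S_unit Sb_upper Sb_diag moment_mat_next_idx flip: factor)
  show ?thesis
    unfolding J_def N1_def N2_def
    using L.A_recurrence[OF a_rng] L.C_recurrence[OF b_rng]
      L.Abar_recurrence[OF b_rng] L.Cbar_recurrence[OF a_rng]
    by blast
qed

end
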